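(* Let $M$ be a paving matroid with $\gamma(M) = \beta(E(M))$, $|E(M)| \ge 2r(M)+2$ and $r(M) \ge 3$. Then there is a basis $B$ of $M$ such that $\gamma(M\backslash B) = \beta(E(M) - B)$ and $r(M\backslash B) = r(M)$.
   Context: A matroid $M$ of rank $r$ is a paving matroid if every circuit of $M$ has at least $r$ elements. For $\emptyset \ne X \subseteq E(M)$, $\beta(X) := |X|/r(X)$ if $r(X) \neq 0$ and $\beta(X) := \infty$ if $r(X)=0$; and $\gamma(N) := \max_{\emptyset \ne X \subseteq E(N)} \beta(X)$ for a matroid $N$ (with $\beta$ computed using the rank function of $N$). $M\backslash B$ denotes the deletion of $B$ from $M$. *)

theory Defs
  imports "HOL-Library.Extended_Real"
begin

definition matroid :: "'a set \<Rightarrow> ('a set \<Rightarrow> bool) \<Rightarrow> bool" where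
  "matroid E indep \<longleftrightarrow>
     finite E \<and> indep {} \<and>
     (\<forall>I. indep I \<longrightarrow> I \<subseteq> E) \<and>
     (\<forall>I J. indep J \<and> I \<subseteq> J \<longrightarrow> indep I) \<and>
     (\<forall>I J. indep I \<and> indep J \<and> card I < card J \<longrightarrow> (\<exists>x\<in>J - I. indep (insert x I)))"

definition rank :: "('a set \<Rightarrow> bool) \<Rightarrow> 'a set \<Rightarrow> nat" where
  "rank indep X = Max {card I | I. I \<subseteq> X \<and> indep I}"

definition circuit :: "'a set \<Rightarrow> ('a set \<Rightarrow> bool) \<Rightarrow> 'a set \<Rightarrow> bool" where
  "circuit E indep C \<longleftrightarrow> C \<subseteq> E \<and> \<not> indep C \<and> (\<forall>x\<in>C. indep (C - {x}))"

definition paving :: "'a set \<Rightarrow> ('a set \<Rightarrow> bool) \<Rightarrow> bool" where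
  "paving E indep \<longleftrightarrow> (\<forall>C. circuit E indep C \<longrightarrow> card C \<ge> rank indep E)"

definition basis :: "'a set \<Rightarrow> ('a set \<Rightarrow> bool) \<Rightarrow> 'a set \<Rightarrow> bool" where
  "basis E indep B \<longleftrightarrow> B \<subseteq> E \<and> indep B \<and> (\<forall>I. indep I \<and> B \<subseteq> I \<longrightarrow> I = B)"

text \<open>Deletion M \ B: ground set E - B, independence restricted.\<close>
definition del_indep :: "'a set \<Rightarrow> ('a set \<Rightarrow> bool) \<Rightarrow> 'a set \<Rightarrow> 'a set \<Rightarrow> bool" where
  "del_indep E indep B = (\<lambda>I. indep I \<and> I \<subseteq> E - B)"

definition beta :: "('a set \<Rightarrow> bool) \<Rightarrow> 'a set \<Rightarrow> ereal" where
  "beta indep X = (if rank indep X = 0 then \<infinity> else ereal (real (card X) / real (rank indep X)))"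

definition gamma :: "'a set \<Rightarrow> ('a set \<Rightarrow> bool) \<Rightarrow> ereal" where
  "gamma E indep = Max (beta indep ` {X. X \<subseteq> E \<and> X \<noteq> {}})"

end

theory Submission
  imports Defs
begin

text \<open>Let r be the rank and n = |E|. For a basis B, let the excess of B be the largest number
  of elements a non-spanning set has outside B, and choose B of minimal excess m. If
  r m > (r - 1)(n - r), take a hyperplane H with |H - B| = m. Since |H| \<ge> r - 1 and the density
  of H is at most n/r, one gets |B \<inter> H| < r - 1, so B can be exchanged for a basis B' containing
  B \<inter> H and one more element of H. In a paving matroid every non-spanning set X not contained
  in H meets H in at most r - 2 elements, and with n \<le> 2m this forces |X - B'| < m, contradicting
  the minimality of m. Hence r m \<le> (r - 1)(n - r). This bound makes E - B spanning and
  bounds the density of every subset of E - B by (n - r)/r = \<beta>(E - B): trivially for spanning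
  subsets, since r \<le> n - r for independent ones, and since the remaining ones have rank r - 1
  and at most m elements.\<close>

lemma beta_le_gamma:
  assumes "finite E" "X \<subseteq> E" "X \<noteq> {}"
  shows "beta indep X \<le> gamma E indep"
  unfolding gamma_def using assms by (intro Max_ge) auto

lemma gamma_eqI:
  assumes "finite E" "E \<noteq> {}"
    and "\<And>X. X \<subseteq> E \<Longrightarrow> X \<noteq> {} \<Longrightarrow> beta indep X \<le> beta indep E"
  shows "gamma E indep = beta indep E"
  unfolding gamma_def using assms by (intro Max_eqI) auto

lemma beta_le_beta_iff:
  assumes "0 < rank indep X" "0 < rank indep Y"
  shows "beta indep X \<le> beta indep Y \<longleftrightarrow> card X * rank indep Y \<le> card Y * rank indep X"
proof -
  have "beta indep X \<le> beta indep Y \<longleftrightarrow>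
      real (card X) / real (rank indep X) \<le> real (card Y) / real (rank indep Y)"
    using assms by (simp add: beta_def)
  also have "\<dots> \<longleftrightarrow> real (card X) * real (rank indep Y) \<le> real (card Y) * real (rank indep X)"
    using assms by (simp add: divide_le_eq le_divide_eq mult.commute)
  also have "\<dots> \<longleftrightarrow> card X * rank indep Y \<le> card Y * rank indep X"
    by (simp flip: of_nat_mult)
  finally show ?thesis .
qed

lemma rank_del_indep:
  assumes "X \<subseteq> E - B"
  shows "rank (del_indep E indep B) X = rank indep X"
  unfolding rank_def del_indep_def using assms by (intro arg_cong[where f = Max]) auto

lemma beta_del_indep:
  assumes "X \<subseteq> E - B"
  shows "beta (del_indep E indep B) X = beta indep X"
  using assms by (simp add: beta_def rank_del_indep)

lemma card_Diff_le_card_Diff_add: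
  assumes "finite X" "finite B"
  shows "card (X - B') \<le> card (X - B) + card (B - B')"
proof -
  have "card (X - B') \<le> card ((X - B) \<union> (B - B'))"
    using assms by (intro card_mono) auto
  also have "\<dots> \<le> card (X - B) + card (B - B')"
    by (rule card_Un_le)
  finally show ?thesis .
qed

lemma card_Diff_add_card_Diff_le:
  assumes "finite E" "X \<subseteq> E" "Y \<subseteq> E"
  shows "card (X - B) + card (Y - B) \<le> card (E - B) + card (X \<inter> Y)"
proof -
  have fin: "finite X" "finite Y"
    using assms finite_subset by blast+
  have "card (X - B) + card (Y - B) = card ((X - B) \<union> (Y - B)) + card ((X - B) \<inter> (Y - B))"
    using fin by (intro card_Un_Int) auto
  also have "\<dots> \<le> card (E - B) + card (X \<inter> Y)"
    using assms fin by (intro add_mono card_mono) auto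
  finally show ?thesis .
qed

lemma excess_bound_arith:
  fixes r n m :: nat
  assumes r: "3 \<le> r" and n: "2 * r + 2 \<le> n" and m: "(r - 1) * (n - r) < r * m"
  shows "n \<le> 2 * m" "r - 1 \<le> m"
proof -
  have "int ((r - 1) * (n - r)) < int (r * m)"
    using m by (simp only: of_nat_less_iff)
  then have "(int r - 1) * (int n - int r) < int r * int m"
    using r n by simp
  then have m': "(int r - 1) * (int n - int r) + 1 \<le> int r * int m"
    by linarith
  show "n \<le> 2 * m"
  proof (rule ccontr)
    assume "\<not> n \<le> 2 * m"
    then have "int r * (2 * int m + 1) \<le> int r * int n"
      by (intro mult_left_mono) auto
    with m' have "(int r - 2) * int n \<le> (int r - 2) * (2 * int r + 1)"
      by (simp add: algebra_simps)
    then have "int n \<le> 2 * int r + 1"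
      using r by (simp add: mult_le_cancel_left)
    with n show False by linarith
  qed
  have "(r - 1) * r \<le> (r - 1) * (n - r)"
    using n by (intro mult_le_mono2) linarith
  with m have "r * (r - 1) < r * m"
    by (metis mult.commute le_less_trans)
  then show "r - 1 \<le> m" by simp
qed

lemma hyperplane_meets_basis_arith:
  fixes r n m k :: nat
  assumes "r * (m + k) \<le> (r - 1) * n" "(r - 1) * (n - r) < r * m" "r \<le> n"
  shows "k + 1 < r"
proof -
  have "(r - 1) * n = (r - 1) * (n - r) + (r - 1) * r"
    using assms(3) by (simp add: diff_mult_distrib2)
  with assms(1) have "r * m + r * k \<le> (r - 1) * (n - r) + (r - 1) * r"
    by (simp add: distrib_left)
  with assms(2) have "r * k < (r - 1) * r"
    by linarith
  then have "k < r - 1"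
    by (simp add: mult.commute)
  then show ?thesis
    by linarith
qed

locale finite_matroid =
  fixes E :: "'a set" and indep :: "'a set \<Rightarrow> bool"
  assumes matroid: "matroid E indep"
begin

lemma finite_E: "finite E"
  using matroid unfolding matroid_def by blast

lemma indep_empty: "indep {}"
  using matroid unfolding matroid_def by blast

lemma indep_subset: "indep I \<Longrightarrow> I \<subseteq> E"
  using matroid unfolding matroid_def by blast

lemma indep_augment: "indep I \<Longrightarrow> indep J \<Longrightarrow> card I < card J \<Longrightarrow> \<exists>x\<in>J - I. indep (insert x I)"
  using matroid unfolding matroid_def by blast

lemma indep_finite: "indep I \<Longrightarrow> finite I"
  using indep_subset finite_E finite_subset by blast

lemma finite_card_indep_subsets: "finite {card I | I. I \<subseteq> X \<and> indep I}"
proof -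
  have "{card I | I. I \<subseteq> X \<and> indep I} \<subseteq> card ` Pow E"
    using indep_subset by auto
  then show ?thesis
    using finite_E finite_subset by blast
qed

lemma card_le_rank: "I \<subseteq> X \<Longrightarrow> indep I \<Longrightarrow> card I \<le> rank indep X"
  unfolding rank_def by (intro Max_ge[OF finite_card_indep_subsets]) auto

lemma obtain_indep_rank:
  obtains I where "I \<subseteq> X" "indep I" "card I = rank indep X"
proof -
  have "{card I | I. I \<subseteq> X \<and> indep I} \<noteq> {}"
    using indep_empty by auto
  from Max_in[OF finite_card_indep_subsets this] show thesis
    using that unfolding rank_def by auto
qed

lemma rank_mono: "X \<subseteq> Y \<Longrightarrow> rank indep X \<le> rank indep Y"
  by (metis obtain_indep_rank card_le_rank order_trans)

lemma rank_empty: "rank indep {} = 0"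
  by (metis obtain_indep_rank card.empty subset_empty)

lemma indep_card_le_rank: "indep I \<Longrightarrow> card I \<le> rank indep E"
  using card_le_rank indep_subset by blast

lemma extend_indep:
  "indep I \<Longrightarrow> indep B \<Longrightarrow> card I \<le> card B \<Longrightarrow>
    \<exists>B'. I \<subseteq> B' \<and> B' \<subseteq> I \<union> B \<and> indep B' \<and> card B' = card B"
proof (induction "card B - card I" arbitrary: I)
  case 0
  then show ?case by (intro exI[of _ I]) auto
next
  case (Suc k)
  then have "card I < card B"
    by linarith
  then obtain x where x: "x \<in> B - I" "indep (insert x I)"
    using indep_augment[OF Suc.prems(1,2)] by blast
  have card_insert: "card (insert x I) = Suc (card I)"
    using x indep_finite[OF Suc.prems(1)] by simp
  with Suc.hyps(2) have "k = card B - card (insert x I)" "card (insert x I) \<le> card B"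
    by linarith+
  from Suc.hyps(1)[OF this(1) x(2) Suc.prems(2) this(2)]
  obtain B' where "insert x I \<subseteq> B'" "B' \<subseteq> insert x I \<union> B" "indep B'" "card B' = card B"
    by blast
  then show ?case using x by (intro exI[of _ B']) auto
qed

lemma basisI_card:
  assumes "indep B" "card B = rank indep E"
  shows "basis E indep B"
  unfolding basis_def
proof (intro conjI allI impI)
  show "B \<subseteq> E" "indep B"
    using assms indep_subset by auto
  fix I assume I: "indep I \<and> B \<subseteq> I"
  then have "finite I"
    using indep_finite by blast
  moreover have "card I \<le> card B"
    using I assms indep_card_le_rank by simp
  ultimately show "I = B"
    using I card_subset_eq card_mono by (metis antisym)
qed

lemma card_Diff_basis:
  assumes "indep B" "card B = rank indep E"
  shows "card (E - B) = card E - rank indep E"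
  using assms indep_subset indep_finite by (simp add: card_Diff_subset)

lemma density_le_of_gamma_eq_beta:
  assumes "gamma E indep = beta indep E" "X \<subseteq> E" "0 < rank indep X"
  shows "card X * rank indep E \<le> card E * rank indep X"
proof -
  have "X \<noteq> {}"
    using assms(3) rank_empty by auto
  then have "beta indep X \<le> beta indep E"
    using assms(1,2) beta_le_gamma finite_E by metis
  moreover have "0 < rank indep E"
    using assms(2,3) rank_mono by (meson less_le_trans)
  ultimately show ?thesis
    using assms(3) beta_le_beta_iff by blast
qed

definition nonspanning :: "'a set \<Rightarrow> bool" where
  "nonspanning X \<longleftrightarrow> X \<subseteq> E \<and> rank indep X < rank indep E"

definition hyperplane :: "'a set \<Rightarrow> bool" where
  "hyperplane H \<longleftrightarrow> nonspanning H \<and> (\<forall>X. nonspanning X \<longrightarrow> H \<subseteq> X \<longrightarrow> X = H)"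

lemma finite_nonspanning: "finite (Collect nonspanning)"
proof -
  have "Collect nonspanning \<subseteq> Pow E"
    by (auto simp: nonspanning_def)
  then show ?thesis
    using finite_E by (meson finite_Pow_iff finite_subset)
qed

lemma nonspanning_subset_hyperplane:
  assumes "nonspanning X"
  obtains H where "hyperplane H" "X \<subseteq> H"
proof -
  define F where "F = {Y. nonspanning Y \<and> X \<subseteq> Y}"
  have "finite F"
    unfolding F_def using finite_nonspanning by (rule rev_finite_subset) auto
  moreover have "X \<in> F"
    using assms by (simp add: F_def)
  ultimately obtain H where H: "H \<in> F" "\<And>Y. Y \<in> F \<Longrightarrow> H \<subseteq> Y \<Longrightarrow> H = Y"
    using finite_has_maximal[of F] by blast
  have "hyperplane H"
    unfolding hyperplane_def
  proof (intro conjI allI impI)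
    show "nonspanning H"
      using H(1) by (simp add: F_def)
    fix Y assume "nonspanning Y" "H \<subseteq> Y"
    then show "Y = H"
      using H unfolding F_def by blast
  qed
  then show thesis
    using that H(1) by (simp add: F_def)
qed

definition excess :: "'a set \<Rightarrow> nat" where
  "excess B = Max ((\<lambda>X. card (X - B)) ` Collect nonspanning)"

lemma card_Diff_le_excess: "nonspanning X \<Longrightarrow> card (X - B) \<le> excess B"
  unfolding excess_def by (rule Max_ge) (use finite_nonspanning in auto)

lemma obtain_excess:
  assumes "0 < rank indep E"
  obtains X where "nonspanning X" "card (X - B) = excess B"
proof -
  have "nonspanning {}"
    using assms rank_empty by (simp add: nonspanning_def)
  then have "(\<lambda>X. card (X - B)) ` Collect nonspanning \<noteq> {}"
    by blast
  from Max_in[OF finite_imageI[OF finite_nonspanning] this]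
  have "excess B \<in> (\<lambda>X. card (X - B)) ` Collect nonspanning"
    unfolding excess_def .
  then obtain X where "nonspanning X" "excess B = card (X - B)"
    by blast
  then show thesis
    using that by simp
qed

end

locale paving_matroid = finite_matroid +
  assumes paving: "paving E indep"
begin

lemma indep_of_card_less_rank:
  assumes X: "X \<subseteq> E" "card X < rank indep E"
  shows "indep X"
proof (rule ccontr)
  assume "\<not> indep X"
  then obtain C where C: "C \<subseteq> X" "\<not> indep C"
    and C_min: "\<And>D. D \<subseteq> X \<and> \<not> indep D \<Longrightarrow> card C \<le> card D"
    using ex_has_least_nat[where P = "\<lambda>C. C \<subseteq> X \<and> \<not> indep C" and k = X and m = card]
    by blast
  have fin_X: "finite X"
    using X finite_E finite_subset by blast
  have "circuit E indep C"
    unfolding circuit_def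
  proof (intro conjI ballI)
    show "C \<subseteq> E" "\<not> indep C"
      using C X by auto
    fix x assume "x \<in> C"
    then have "card (C - {x}) < card C"
      using C fin_X by (meson card_Diff1_less finite_subset)
    then show "indep (C - {x})"
      using C_min[of "C - {x}"] C by fastforce
  qed
  then have "rank indep E \<le> card C"
    using paving unfolding paving_def by blast
  moreover have "card C \<le> card X"
    using C fin_X by (intro card_mono)
  ultimately show False
    using X by linarith
qed

lemma rank_ge_of_card:
  assumes "X \<subseteq> E" "rank indep E - 1 \<le> card X"
  shows "rank indep E - 1 \<le> rank indep X"
proof (cases "rank indep E = 0")
  case False
  obtain I where I: "I \<subseteq> X" "card I = rank indep E - 1"
    using assms(2) by (rule obtain_subset_with_card_n)
  have "I \<subseteq> E"
    using I(1) assms(1) by blast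
  moreover have "card I < rank indep E"
    using I(2) False by linarith
  ultimately have "indep I"
    by (rule indep_of_card_less_rank)
  then show ?thesis
    using card_le_rank[OF I(1)] I(2) by simp
qed simp

lemma rank_pos:
  assumes "X \<subseteq> E" "X \<noteq> {}" "1 < rank indep E"
  shows "0 < rank indep X"
proof -
  obtain a where a: "a \<in> X"
    using assms(2) by blast
  have "indep {a}"
    by (rule indep_of_card_less_rank) (use assms a in auto)
  then have "card {a} \<le> rank indep X"
    by (rule card_le_rank[rotated]) (use a in blast)
  then show ?thesis
    by simp
qed

lemma nonspanning_rank:
  assumes "nonspanning X" "rank indep E - 1 \<le> card X"
  shows "rank indep X = rank indep E - 1"
proof -
  have "X \<subseteq> E" "rank indep X < rank indep E"
    using assms(1) unfolding nonspanning_def by auto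
  with rank_ge_of_card[OF this(1) assms(2)] show ?thesis
    by linarith
qed

text \<open>r - 1 common elements would be independent, and augmenting them from an independent
  r-set inside the spanning union puts r independent elements into X or into Y.\<close>

lemma card_Int_nonspanning_le:
  assumes X: "nonspanning X" and Y: "nonspanning Y" and XY: "\<not> nonspanning (X \<union> Y)"
  shows "card (X \<inter> Y) \<le> rank indep E - 2"
proof (rule ccontr)
  define r where "r = rank indep E"
  assume "\<not> card (X \<inter> Y) \<le> rank indep E - 2"
  then have "r - 1 \<le> card (X \<inter> Y)"
    unfolding r_def by linarith
  then obtain I where I: "I \<subseteq> X \<inter> Y" "card I = r - 1"
    by (rule obtain_subset_with_card_n)
  have r_pos: "0 < r"
    using X unfolding nonspanning_def r_def by linarith
  have "I \<subseteq> E"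
    using I X unfolding nonspanning_def by blast
  moreover have "card I < rank indep E"
    using I(2) r_pos unfolding r_def by linarith
  ultimately have indep_I: "indep I"
    by (rule indep_of_card_less_rank)
  obtain J where J: "J \<subseteq> X \<union> Y" "indep J" "card J = rank indep (X \<union> Y)"
    by (rule obtain_indep_rank)
  have "r \<le> card J"
    using X Y XY J unfolding nonspanning_def r_def by auto
  then obtain z where z: "z \<in> J - I" "indep (insert z I)"
    using indep_augment[OF indep_I J(2)] I r_pos by fastforce
  have card_zI: "card (insert z I) = r"
    using z I r_pos indep_finite[OF indep_I] by simp
  have "insert z I \<subseteq> X \<or> insert z I \<subseteq> Y"
    using z J I by blast
  then have "r \<le> rank indep X \<or> r \<le> rank indep Y"
    using card_le_rank[OF _ z(2)] card_zI by metis
  then show False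
    using X Y unfolding nonspanning_def r_def by linarith
qed

lemma hyperplane_Int_cases:
  assumes "hyperplane H" "nonspanning X"
  shows "X \<subseteq> H \<or> card (X \<inter> H) \<le> rank indep E - 2"
proof (cases "nonspanning (X \<union> H)")
  case True
  then have "X \<union> H = H"
    using assms(1) unfolding hyperplane_def by blast
  then show ?thesis by blast
next
  case False
  then show ?thesis
    using assms card_Int_nonspanning_le unfolding hyperplane_def by blast
qed

lemma basis_exchange_into:
  assumes B: "indep B" "card B = rank indep E"
    and X: "X \<subseteq> E" "x \<in> X - B" "card (B \<inter> X) + 1 < rank indep E"
  obtains B' where "indep B'" "card B' = rank indep E" "card (X - B') < card (X - B)"
    "\<And>Y. finite Y \<Longrightarrow> card (Y - B') \<le> card (Y - B) + 1"
proof -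
  define I where "I = insert x (B \<inter> X)"
  have fin_B: "finite B"
    using B(1) by (rule indep_finite)
  have card_I: "card I \<le> card (B \<inter> X) + 1"
    unfolding I_def using fin_B by (simp add: card_insert_if)
  have "I \<subseteq> E"
    using X unfolding I_def by blast
  moreover have "card I < rank indep E"
    using card_I X(3) by linarith
  ultimately have "indep I"
    by (rule indep_of_card_less_rank)
  moreover have "card I \<le> card B"
    using card_I X(3) B(2) by linarith
  ultimately obtain B' where B': "I \<subseteq> B'" "B' \<subseteq> I \<union> B" "indep B'" "card B' = card B"
    using extend_indep[OF _ B(1)] by blast
  have x: "x \<in> B'" "x \<notin> B"
    using B' X(2) unfolding I_def by auto
  have fin_B': "finite B'"
    using B'(3) by (rule indep_finite)
  have "B - B' = B - (B' - {x})"
    using x by blast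
  moreover have "card (B - (B' - {x})) = card B - card (B' - {x})"
    using B'(2) fin_B' unfolding I_def by (intro card_Diff_subset) auto
  ultimately have card_B_B': "card (B - B') \<le> 1"
    using x fin_B' B'(4) by simp
  have "X - B' \<subseteq> (X - B) - {x}"
    using B'(1) x unfolding I_def by blast
  then have "card (X - B') < card (X - B)"
    using X finite_E finite_subset
    by (metis card_Diff1_less card_mono finite_Diff le_less_trans)
  moreover have "card (Y - B') \<le> card (Y - B) + 1" if "finite Y" for Y
    using card_Diff_le_card_Diff_add[OF that fin_B, of B'] card_B_B' by linarith
  ultimately show thesis
    using that B' B(2) by auto
qed

context
  assumes gamma_eq_beta: "gamma E indep = beta indep E"
    and card_E_ge: "2 * rank indep E + 2 \<le> card E"
    and rank_ge_3: "rank indep E \<ge> 3"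
begin

lemma excess_descent:
  assumes B: "indep B" "card B = rank indep E"
    and large: "(rank indep E - 1) * (card E - rank indep E) < rank indep E * excess B"
  obtains B' where "indep B'" "card B' = rank indep E" "excess B' < excess B"
proof -
  define r n m where "r = rank indep E" and "n = card E" and "m = excess B"
  have r3: "3 \<le> r" and n: "2 * r + 2 \<le> n" and large': "(r - 1) * (n - r) < r * m"
    using rank_ge_3 card_E_ge large by (simp_all add: r_def n_def m_def)
  have n_le: "n \<le> 2 * m" and m_ge: "r - 1 \<le> m"
    using excess_bound_arith[OF r3 n large'] by simp_all
  have r_pos: "0 < rank indep E"
    using r3 unfolding r_def by linarith
  obtain X0 where X0: "nonspanning X0" "card (X0 - B) = excess B"
    by (rule obtain_excess[OF r_pos])
  obtain H where H: "hyperplane H" "X0 \<subseteq> H"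
    by (rule nonspanning_subset_hyperplane[OF X0(1)])
  have H_ns: "nonspanning H"
    using H(1) unfolding hyperplane_def by blast
  then have H_E: "H \<subseteq> E" and fin_H: "finite H"
    using finite_E finite_subset unfolding nonspanning_def by blast+
  have "card (X0 - B) \<le> card (H - B)"
    using H(2) fin_H by (intro card_mono) auto
  then have card_H_B: "card (H - B) = m"
    using card_Diff_le_excess[OF H_ns, of B] X0(2) unfolding m_def by linarith
  have "r - 1 \<le> card H"
    using card_H_B m_ge card_mono[OF fin_H Diff_subset[of H B]] by linarith
  then have "rank indep H = r - 1"
    using nonspanning_rank[OF H_ns] unfolding r_def by blast
  then have density: "card H * r \<le> n * (r - 1)"
    using density_le_of_gamma_eq_beta[OF gamma_eq_beta H_E] r3 unfolding r_def n_def by simp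
  have split: "card H = m + card (B \<inter> H)"
    using card_H_B fin_H card_Diff_subset_Int[of H B] card_mono[OF fin_H, of "B \<inter> H"]
    by (simp add: Int_commute)
  have "r * (m + card (B \<inter> H)) \<le> (r - 1) * n"
    using density split by (metis mult.commute)
  then have "card (B \<inter> H) + 1 < rank indep E"
    using hyperplane_meets_basis_arith[OF _ large'] n unfolding r_def by simp
  moreover have "H - B \<noteq> {}"
  proof
    assume "H - B = {}"
    then have "m = 0"
      using card_H_B by (metis card.empty)
    with m_ge r3 show False
      by linarith
  qed
  then obtain x where "x \<in> H - B"
    by blast
  ultimately obtain B' where B': "indep B'" "card B' = rank indep E" "card (H - B') < card (H - B)"
    and B'_step: "\<And>Y. finite Y \<Longrightarrow> card (Y - B') \<le> card (Y - B) + 1"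
    using basis_exchange_into[OF B H_E] by blast
  obtain X where X: "nonspanning X" "card (X - B') = excess B'"
    by (rule obtain_excess[OF r_pos])
  have X_E: "X \<subseteq> E" and fin_X: "finite X"
    using X(1) finite_E finite_subset unfolding nonspanning_def by blast+
  consider "X \<subseteq> H" | "card (X \<inter> H) \<le> r - 2"
    using hyperplane_Int_cases[OF H(1) X(1)] unfolding r_def by blast
  then have "card (X - B') < m"
  proof cases
    case 1
    then have "card (X - B') \<le> card (H - B')"
      using fin_H by (intro card_mono) auto
    then show ?thesis
      using B'(3) card_H_B by linarith
  next
    case 2
    have "card (E - B) = n - r"
      using card_Diff_basis[OF B] unfolding r_def n_def .
    then have "card (X - B) + m \<le> n - r + (r - 2)"
      using card_Diff_add_card_Diff_le[OF finite_E X_E H_E, of B] card_H_B 2 by linarith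
    then show ?thesis
      using B'_step[OF fin_X] n_le n r3 by linarith
  qed
  then show thesis
    using that B'(1,2) X(2) unfolding m_def by simp
qed

lemma obtain_basis_small_excess:
  obtains B where "indep B" "card B = rank indep E"
    "rank indep E * excess B \<le> (rank indep E - 1) * (card E - rank indep E)"
proof -
  obtain B0 where "indep B0" "card B0 = rank indep E"
    using obtain_indep_rank[of E] by metis
  then obtain B where B: "indep B" "card B = rank indep E"
    and B_min: "\<And>B'. indep B' \<and> card B' = rank indep E \<Longrightarrow> excess B \<le> excess B'"
    using ex_has_least_nat[where P = "\<lambda>B. indep B \<and> card B = rank indep E" and k = B0 and m = excess]
    by blast
  have "\<not> (rank indep E - 1) * (card E - rank indep E) < rank indep E * excess B"
  proof
    assume "(rank indep E - 1) * (card E - rank indep E) < rank indep E * excess B"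
    then obtain B' where "indep B'" "card B' = rank indep E" "excess B' < excess B"
      using excess_descent[OF B] by blast
    with B_min show False
      by fastforce
  qed
  then show thesis
    using that B by simp
qed

context
  fixes B :: "'a set"
  assumes basis_B: "indep B" "card B = rank indep E"
    and small_excess: "rank indep E * excess B \<le> (rank indep E - 1) * (card E - rank indep E)"
begin

lemma rank_Diff_basis: "rank indep (E - B) = rank indep E"
proof (rule antisym)
  show "rank indep (E - B) \<le> rank indep E"
    by (rule rank_mono) blast
  show "rank indep E \<le> rank indep (E - B)"
  proof (rule ccontr)
    assume "\<not> rank indep E \<le> rank indep (E - B)"
    then have "nonspanning (E - B)"
      unfolding nonspanning_def by auto
    then have "card (E - B - B) \<le> excess B"
      by (rule card_Diff_le_excess)
    then have "card E - rank indep E \<le> excess B"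
      using card_Diff_basis[OF basis_B] by (simp add: Diff_idemp)
    then have "rank indep E * (card E - rank indep E) \<le> (rank indep E - 1) * (card E - rank indep E)"
      using small_excess mult_le_mono2 order_trans by blast
    moreover have "0 < card E - rank indep E"
      using card_E_ge by linarith
    ultimately show False
      using rank_ge_3 by simp
  qed
qed

lemma card_mult_rank_le_Diff_basis:
  assumes X: "X \<subseteq> E - B"
  shows "card X * rank indep E \<le> (card E - rank indep E) * rank indep X"
proof -
  define r n k where "r = rank indep E" and "n = card E" and "k = rank indep X"
  have X_E: "X \<subseteq> E"
    using X by blast
  have card_E_B: "card (E - B) = n - r"
    using card_Diff_basis[OF basis_B] unfolding r_def n_def .
  have "k \<le> r"
    using rank_mono[OF X_E] unfolding k_def r_def .
  then consider "k = r" | "k < r" "card X < r" | "k < r" "r - 1 \<le> card X"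
    by linarith
  then have "card X * r \<le> (n - r) * k"
  proof cases
    case 1
    have "card X \<le> n - r"
      using card_mono[OF _ X] finite_E card_E_B by simp
    with 1 show ?thesis
      by (simp add: mult.commute)
  next
    case 2
    then have "indep X"
      using indep_of_card_less_rank[OF X_E] unfolding r_def by blast
    then have "card X \<le> k"
      using card_le_rank[OF order_refl] unfolding k_def by blast
    moreover have "r \<le> n - r"
      using card_E_ge unfolding r_def n_def by linarith
    ultimately show ?thesis
      by (metis mult.commute mult_le_mono)
  next
    case 3
    then have "nonspanning X"
      using X_E unfolding nonspanning_def k_def r_def by blast
    then have "k = r - 1" and "card (X - B) \<le> excess B"
      using nonspanning_rank 3(2) card_Diff_le_excess unfolding k_def r_def by blast+
    moreover have "X - B = X"
      using X by blast
    ultimately have "card X * r \<le> (r - 1) * (n - r)"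
      using small_excess unfolding r_def n_def by (metis mult.commute mult_le_mono1 order_trans)
    then show ?thesis
      using \<open>k = r - 1\<close> by (simp add: mult.commute)
  qed
  then show ?thesis
    unfolding r_def n_def k_def .
qed

lemma gamma_del_basis:
  "gamma (E - B) (del_indep E indep B) = beta (del_indep E indep B) (E - B)"
proof (rule gamma_eqI)
  show "finite (E - B)"
    using finite_E by blast
  have "card (E - B) \<noteq> 0"
    using card_Diff_basis[OF basis_B] card_E_ge by linarith
  then show "E - B \<noteq> {}"
    by (metis card.empty)
  fix X assume X: "X \<subseteq> E - B" "X \<noteq> {}"
  have rank_X: "0 < rank indep X"
    using X rank_ge_3 by (intro rank_pos) auto
  have rank_E_B: "0 < rank indep (E - B)"
    using rank_Diff_basis rank_ge_3 by linarith
  have "card X * rank indep (E - B) \<le> card (E - B) * rank indep X"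
    using card_mult_rank_le_Diff_basis[OF X(1)] rank_Diff_basis card_Diff_basis[OF basis_B]
    by simp
  then have "beta indep X \<le> beta indep (E - B)"
    using beta_le_beta_iff[OF rank_X rank_E_B] by blast
  then show "beta (del_indep E indep B) X \<le> beta (del_indep E indep B) (E - B)"
    using X(1) by (simp add: beta_del_indep)
qed

end

end

end

theorem proposition1:
  fixes E :: "'a set" and indep :: "'a set \<Rightarrow> bool"
  assumes "matroid E indep"
    and "paving E indep"
    and "gamma E indep = beta indep E"
    and "card E \<ge> 2 * rank indep E + 2"
    and "rank indep E \<ge> 3"
  shows "\<exists>B. basis E indep B \<and>
             gamma (E - B) (del_indep E indep B) = beta (del_indep E indep B) (E - B) \<and>
             rank (del_indep E indep B) (E - B) = rank indep E"
proof -
  interpret paving_matroid E indep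
    by unfold_locales (fact assms)+
  obtain B where B: "indep B" "card B = rank indep E"
    "rank indep E * excess B \<le> (rank indep E - 1) * (card E - rank indep E)"
    by (rule obtain_basis_small_excess[OF assms(3-5)])
  show ?thesis
  proof (intro exI conjI)
    show "basis E indep B"
      by (rule basisI_card[OF B(1,2)])
    show "gamma (E - B) (del_indep E indep B) = beta (del_indep E indep B) (E - B)"
      by (rule gamma_del_basis[OF assms(3-5) B])
    show "rank (del_indep E indep B) (E - B) = rank indep E"
      using rank_Diff_basis[OF assms(3-5) B] by (simp add: rank_del_indep)
  qed
qed

end
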